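(* Let $k\ge 2$ and let $I$ be a purified instance relative to $C_k$ such that the instance graph $F_{C_k}(I)$ is strongly connected. If $F_{C_k}(I)$ contains a directed simple cycle of length greater than $k$, then $\mathcal M_{C_k}(I)=\{\emptyset\}$ (in particular $I\not\vDash C_k$). Otherwise $\mathcal M_{C_k}(I)=\{\{(a_1,\dots,a_k)\}: (a_1,\dots,a_k)\in C_k^f(I)\}$, i.e. every frugal repair yields exactly one answer tuple (one $k$-cycle $a_1\to a_2\to\dots\to a_k\to a_1$ of $F_{C_k}(I)$), and every such $k$-cycle is the unique answer of some frugal repair.
   Context: For $k\ge2$, $C_k=R_1(\underline{x_1},x_2),\dots,R_k(\underline{x_k},x_1)$ with the first attribute of each atom the key; relations may be of consistent or inconsistent type. A repair of $I$ is a maximal subset of $I$ satisfying all key constraints (one tuple per key-group); $I\vDash C_k$ means $C_k(r)$ holds for every repair. $C_k^f(r)$ is the set of tuples $(a_1,\dots,a_k)$ with $R_i(a_i,a_{i+1})\in r$ for all $i$ (indices mod $k$). A repair $r$ is frugal if no repair $r'$ has $C_k^f(r')\subsetneq C_k^f(r)$, and $\mathcal M_{C_k}(I)=\{C_k^f(r): r$ frugal$\}$. $I$ is purified relative to $C_k$ if every tuple of each $R_i^I$ occurs in some tuple of $C_k^f(I)$. The instance graph $F_{C_k}(I)$ has the constants of $I$ as vertices and an edge $(a,b)$ for each tuple $R_i(a,b)\in I$; constants in positions of distinct variables are assumed distinct. *)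

theory Defs
  imports Main
begin

(* An instance for C_k = R_0(x_0,x_1),...,R_{k-1}(x_{k-1},x_0) is a family
   I :: nat => ('a * 'a) set, where I i (for i < k) is the relation R_i;
   the first component of each pair is the key. Indices are taken mod k. *)

definition key_cons :: "('a \<times> 'a) set \<Rightarrow> bool" where
  "key_cons R \<longleftrightarrow> (\<forall>a b c. (a, b) \<in> R \<and> (a, c) \<in> R \<longrightarrow> b = c)"

definition repair :: "nat \<Rightarrow> (nat \<Rightarrow> ('a \<times> 'a) set) \<Rightarrow> (nat \<Rightarrow> ('a \<times> 'a) set) \<Rightarrow> bool" where
  "repair k I r \<longleftrightarrow>
     (\<forall>i<k. r i \<subseteq> I i \<and> key_cons (r i)) \<and>
     (\<forall>r'. (\<forall>i<k. r i \<subseteq> r' i \<and> r' i \<subseteq> I i \<and> key_cons (r' i)) \<longrightarrow> (\<forall>i<k. r' i = r i))"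

definition Cf :: "nat \<Rightarrow> (nat \<Rightarrow> ('a \<times> 'a) set) \<Rightarrow> 'a list set" where
  "Cf k r = {as. length as = k \<and> (\<forall>i<k. (as ! i, as ! ((i + 1) mod k)) \<in> r i)}"

definition frugal :: "nat \<Rightarrow> (nat \<Rightarrow> ('a \<times> 'a) set) \<Rightarrow> (nat \<Rightarrow> ('a \<times> 'a) set) \<Rightarrow> bool" where
  "frugal k I r \<longleftrightarrow> repair k I r \<and> \<not> (\<exists>r'. repair k I r' \<and> Cf k r' \<subset> Cf k r)"

definition MC :: "nat \<Rightarrow> (nat \<Rightarrow> ('a \<times> 'a) set) \<Rightarrow> 'a list set set" where
  "MC k I = {Cf k r | r. frugal k I r}"

definition entails :: "nat \<Rightarrow> (nat \<Rightarrow> ('a \<times> 'a) set) \<Rightarrow> bool" where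
  "entails k I \<longleftrightarrow> (\<forall>r. repair k I r \<longrightarrow> Cf k r \<noteq> {})"

definition purified :: "nat \<Rightarrow> (nat \<Rightarrow> ('a \<times> 'a) set) \<Rightarrow> bool" where
  "purified k I \<longleftrightarrow>
     (\<forall>i<k. \<forall>a b. (a, b) \<in> I i \<longrightarrow>
        (\<exists>as \<in> Cf k I. as ! i = a \<and> as ! ((i + 1) mod k) = b))"

(* constants occurring in positions of variable x_i *)
definition var_consts :: "nat \<Rightarrow> (nat \<Rightarrow> ('a \<times> 'a) set) \<Rightarrow> nat \<Rightarrow> 'a set" where
  "var_consts k I i = Domain (I i) \<union> Range (I ((i + k - 1) mod k))"

definition distinct_positions :: "nat \<Rightarrow> (nat \<Rightarrow> ('a \<times> 'a) set) \<Rightarrow> bool" where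
  "distinct_positions k I \<longleftrightarrow>
     (\<forall>i<k. \<forall>j<k. i \<noteq> j \<longrightarrow> var_consts k I i \<inter> var_consts k I j = {})"

definition inst_edges :: "nat \<Rightarrow> (nat \<Rightarrow> ('a \<times> 'a) set) \<Rightarrow> ('a \<times> 'a) set" where
  "inst_edges k I = (\<Union>i<k. I i)"

definition inst_vertices :: "nat \<Rightarrow> (nat \<Rightarrow> ('a \<times> 'a) set) \<Rightarrow> 'a set" where
  "inst_vertices k I = Domain (inst_edges k I) \<union> Range (inst_edges k I)"

definition strongly_connected :: "'a set \<Rightarrow> ('a \<times> 'a) set \<Rightarrow> bool" where
  "strongly_connected V E \<longleftrightarrow> V \<noteq> {} \<and> (\<forall>u\<in>V. \<forall>v\<in>V. (u, v) \<in> E\<^sup>*)"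

definition simple_cycle :: "('a \<times> 'a) set \<Rightarrow> 'a list \<Rightarrow> bool" where
  "simple_cycle E vs \<longleftrightarrow> vs \<noteq> [] \<and> distinct vs \<and>
     (\<forall>j<length vs. (vs ! j, vs ! ((j + 1) mod length vs)) \<in> E)"

end

theory Submission
  imports Defs
begin

text \<open>
  Purification and distinct positions give every constant a unique layer \<open>i\<close> (it occurs as
  a key of \<open>R\<^sub>i\<close>), and every edge of the instance graph leads from layer \<open>i\<close> to layer
  \<open>i + 1 mod k\<close>; hence every simple cycle has length divisible by \<open>k\<close>.  A repair chooses
  one successor \<open>f v\<close> for each constant, and its answers are the closed walks of \<open>f\<close> of
  length \<open>k\<close> starting in layer 0.

  For a simple cycle \<open>vs\<close>, let \<open>f\<close> follow \<open>vs\<close> on \<open>vs\<close> and step strictly closer to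
  \<open>vs\<close> elsewhere (possible by strong connectivity).  Every closed walk of \<open>f\<close> then runs
  around \<open>vs\<close>, so its length is a multiple of \<open>|vs|\<close>.  If \<open>|vs| > k\<close> this repair has
  no answer at all, which forces \<open>\<M> = {\<emptyset>}\<close>.  For \<open>vs = t\<close> an answer tuple it has the
  single answer \<open>t\<close>.  If no simple cycle is longer than \<open>k\<close>, the cycle that the choice
  function of any repair must contain has length exactly \<open>k\<close> and is an answer, so every
  frugal repair has exactly one answer.
\<close>

section \<open>Frugal repairs\<close>

lemma repair_Cf_subset: "repair k I r \<Longrightarrow> Cf k r \<subseteq> Cf k I"
  unfolding repair_def Cf_def by fastforce

lemma Cf_cong: "(\<And>i. i < k \<Longrightarrow> r i = r' i) \<Longrightarrow> Cf k r = Cf k r'"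
  unfolding Cf_def by auto

lemma repair_total:
  assumes r: "repair k I r" and "i < k" and "a \<in> Domain (I i)"
  shows "a \<in> Domain (r i)"
proof (rule ccontr)
  assume a_free: "a \<notin> Domain (r i)"
  obtain b where ab: "(a, b) \<in> I i" using \<open>a \<in> Domain (I i)\<close> by auto
  let ?r' = "r(i := insert (a, b) (r i))"
  have "\<forall>j<k. r j \<subseteq> ?r' j \<and> ?r' j \<subseteq> I j \<and> key_cons (?r' j)"
  proof (intro allI impI conjI)
    fix j assume "j < k"
    then have "r j \<subseteq> I j" and "key_cons (r j)" using r unfolding repair_def by auto
    then show "r j \<subseteq> ?r' j" "?r' j \<subseteq> I j" "key_cons (?r' j)"
      using ab a_free unfolding key_cons_def by auto
  qed
  then have "?r' i = r i" using r \<open>i < k\<close> unfolding repair_def by blast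
  then show False using a_free by auto
qed

lemma MC_eq_empty_if_answerless_repair:
  assumes "repair k I r\<^sub>0" and "Cf k r\<^sub>0 = {}"
  shows "MC k I = {{}}"
proof -
  have "frugal k I r\<^sub>0" using assms unfolding frugal_def by auto
  moreover have "Cf k r = {}" if "frugal k I r" for r
    using that assms unfolding frugal_def by auto
  ultimately show ?thesis unfolding MC_def using assms(2) by blast
qed

lemma MC_eq_singletons:
  assumes answer: "\<And>r. repair k I r \<Longrightarrow> Cf k r \<noteq> {}"
    and single: "\<And>t. t \<in> Cf k I \<Longrightarrow> \<exists>r. repair k I r \<and> Cf k r = {t}"
  shows "MC k I = {{t} | t. t \<in> Cf k I}"
proof (intro equalityI subsetI)
  fix X assume "X \<in> MC k I"
  then obtain r where X: "X = Cf k r" and r: "frugal k I r" unfolding MC_def by auto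
  then obtain t where t: "t \<in> Cf k r" using answer unfolding frugal_def by blast
  then have tI: "t \<in> Cf k I" using r repair_Cf_subset unfolding frugal_def by blast
  with single obtain r' where r': "repair k I r'" "Cf k r' = {t}" by blast
  with r have "\<not> {t} \<subset> Cf k r" unfolding frugal_def by auto
  with t have "Cf k r = {t}" by blast
  with X tI show "X \<in> {{t} | t. t \<in> Cf k I}" by blast
next
  fix X assume "X \<in> {{t} | t. t \<in> Cf k I}"
  then obtain t r where X: "X = {t}" and r: "repair k I r" "Cf k r = {t}"
    using single by blast
  have "frugal k I r" unfolding frugal_def
  proof (intro conjI notI)
    show "repair k I r" by fact
    assume "\<exists>r'. repair k I r' \<and> Cf k r' \<subset> Cf k r"
    then obtain r' where "repair k I r'" "Cf k r' \<subset> {t}" using r by auto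
    then show False using answer by blast
  qed
  with X r show "X \<in> MC k I" unfolding MC_def by blast
qed

section \<open>Closed walks of a function\<close>

definition closed_walk :: "('a \<Rightarrow> 'a) \<Rightarrow> 'a list \<Rightarrow> bool" where
  "closed_walk f xs \<longleftrightarrow> (\<forall>i<length xs. xs ! (Suc i mod length xs) = f (xs ! i))"

lemma closed_walk_funpow:
  assumes "closed_walk f xs" and "j < length xs"
  shows "(f ^^ i) (xs ! j) = xs ! ((j + i) mod length xs)"
proof (induction i)
  case 0
  then show ?case using assms(2) by simp
next
  case (Suc i)
  have "xs \<noteq> []" using assms(2) by auto
  then have "(j + i) mod length xs < length xs" by simp
  then have "xs ! (Suc ((j + i) mod length xs) mod length xs) = f (xs ! ((j + i) mod length xs))"
    using assms(1) unfolding closed_walk_def by blast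
  then show ?case using Suc by (simp add: mod_Suc_eq)
qed

lemma closed_walk_eqI:
  assumes "closed_walk f xs" "closed_walk f ys" "length xs = length ys" "xs ! 0 = ys ! 0"
  shows "xs = ys"
proof (rule nth_equalityI)
  fix i assume "i < length xs"
  moreover from this have "xs \<noteq> []" "ys \<noteq> []" using assms(3) by auto
  ultimately show "xs ! i = ys ! i"
    using closed_walk_funpow[OF assms(1), of 0 i] closed_walk_funpow[OF assms(2), of 0 i] assms(3,4)
    by auto
qed (fact assms(3))

lemma closed_walk_rotate:
  assumes "closed_walk f xs"
  shows "closed_walk f (rotate m xs)"
  unfolding closed_walk_def
proof (intro allI impI)
  fix i assume i: "i < length (rotate m xs)"
  then have "xs \<noteq> []" by auto
  then have "(m + i) mod length xs < length xs" by simp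
  then have step: "xs ! (Suc ((m + i) mod length xs) mod length xs) = f (xs ! ((m + i) mod length xs))"
    using assms unfolding closed_walk_def by blast
  have "(m + Suc i mod length xs) mod length xs = Suc ((m + i) mod length xs) mod length xs"
    by (simp add: mod_add_right_eq mod_Suc_eq)
  with step i \<open>xs \<noteq> []\<close>
  show "rotate m xs ! (Suc i mod length (rotate m xs)) = f (rotate m xs ! i)"
    by (simp add: nth_rotate)
qed

lemma closed_walk_length_dvd:
  assumes vs: "closed_walk f vs" "distinct vs"
    and xs: "closed_walk f xs" "xs \<noteq> []" "xs ! 0 \<in> set vs"
  shows "length vs dvd length xs"
proof -
  obtain j where j: "j < length vs" "xs ! 0 = vs ! j" using xs(3) by (auto simp: in_set_conv_nth)
  then have "vs \<noteq> []" by auto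
  then have "(j + length xs) mod length vs < length vs" by simp
  have "vs ! ((j + length xs) mod length vs) = (f ^^ length xs) (xs ! 0)"
    using closed_walk_funpow[OF vs(1) j(1)] j(2) by simp
  also have "\<dots> = vs ! j" using closed_walk_funpow[OF xs(1), of 0] xs(2) j(2) by simp
  finally have "(j + length xs) mod length vs = j mod length vs"
    using vs(2) j(1) \<open>(j + length xs) mod length vs < length vs\<close> by (simp add: nth_eq_iff_index_eq)
  then show ?thesis by (simp add: mod_eq_dvd_iff_nat)
qed

lemma closed_walk_in_invariant_set:
  fixes \<mu> :: "'a \<Rightarrow> nat"
  assumes invariant: "\<forall>x\<in>A. f x \<in> A" and descent: "\<forall>x\<in>S - A. \<mu> (f x) < \<mu> x"
    and xs: "closed_walk f xs" "set xs \<subseteq> S"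
  shows "set xs \<subseteq> A"
proof (rule ccontr)
  let ?n = "length xs"
  let ?B = "{j. j < ?n \<and> xs ! j \<notin> A}"
  assume "\<not> set xs \<subseteq> A"
  then have "?B \<noteq> {}" by (auto simp: in_set_conv_nth)
  moreover have "finite ?B" by simp
  ultimately obtain j where j: "j \<in> ?B" and max: "Max ((\<lambda>i. \<mu> (xs ! i)) ` ?B) = \<mu> (xs ! j)"
    using obtains_MAX[of ?B "\<lambda>i. \<mu> (xs ! i)"] by blast
  define p where "p = (j + ?n - 1) mod ?n"
  have "0 < ?n" using j by auto
  then have p: "p < ?n" "Suc p mod ?n = j" using j unfolding p_def by (auto simp: mod_Suc_eq)
  then have "xs ! j = f (xs ! p)" using xs(1) unfolding closed_walk_def by metis
  show False
  proof (cases "xs ! p \<in> A")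
    case True
    then show False using invariant j \<open>xs ! j = f (xs ! p)\<close> by auto
  next
    case False
    then have "\<mu> (xs ! p) \<le> \<mu> (xs ! j)" using p(1) max by (metis (no_types, lifting) Max_ge finite_imageI \<open>finite ?B\<close> image_eqI mem_Collect_eq)
    moreover have "\<mu> (xs ! j) < \<mu> (xs ! p)" using False descent xs(2) p \<open>xs ! j = f (xs ! p)\<close> by (metis DiffI nth_mem subsetD)
    ultimately show False by simp
  qed
qed

lemma finite_self_map_cycle:
  assumes "finite S" "x \<in> S" "f ` S \<subseteq> S"
  obtains vs where "vs \<noteq> []" "distinct vs" "set vs \<subseteq> S" "closed_walk f vs"
proof -
  define w where "w n = (f ^^ n) x" for n
  have w_Suc: "w (Suc n) = f (w n)" for n by (simp add: w_def)
  have w_S: "w n \<in> S" for n by (induction n) (use assms in \<open>auto simp: w_def\<close>)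
  have "\<not> inj w"
  proof
    assume "inj w"
    moreover have "finite (range w)" using w_S assms(1) by (meson finite_subset image_subsetI)
    ultimately show False by (simp add: finite_image_iff)
  qed
  then obtain m n where "m < n" "w m = w n" unfolding inj_def by (metis linorder_neqE_nat)
  then have repeat: "\<exists>n. \<exists>m<n. w m = w n" by blast
  define N where "N = (LEAST n. \<exists>m<n. w m = w n)"
  obtain M where MN: "M < N" "w M = w N" using LeastI_ex[OF repeat] unfolding N_def by blast
  have no_repeat: "\<not> (\<exists>m<n. w m = w n)" if "n < N" for n
    using that unfolding N_def by (rule not_less_Least)
  have "inj_on w {..<N}"
  proof (rule inj_onI)
    fix a b assume "a \<in> {..<N}" "b \<in> {..<N}" "w a = w b"
    then show "a = b"
      using no_repeat[of a] no_repeat[of b] by (cases a b rule: linorder_cases) auto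
  qed
  then have "inj_on w {M..<N}" by (rule inj_on_subset) auto
  let ?vs = "map w [M..<N]"
  show thesis
  proof
    show "?vs \<noteq> []" "distinct ?vs" "set ?vs \<subseteq> S"
      using MN \<open>inj_on w {M..<N}\<close> w_S by (auto simp: distinct_map)
    show "closed_walk f ?vs" unfolding closed_walk_def
    proof (intro allI impI)
      fix i assume i: "i < length ?vs"
      show "?vs ! (Suc i mod length ?vs) = f (?vs ! i)"
      proof (cases "Suc i < N - M")
        case True
        then show ?thesis using w_Suc by simp
      next
        case False
        with i have "Suc i = N - M" "Suc (M + i) = N" by simp_all
        then show ?thesis using MN w_Suc[of "M + i"] by simp
      qed
    qed
  qed
qed

definition cycle_next :: "'a list \<Rightarrow> 'a \<Rightarrow> 'a" where
  "cycle_next vs v = vs ! (Suc (THE j. j < length vs \<and> vs ! j = v) mod length vs)"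

lemma cycle_next_nth:
  assumes "distinct vs" "j < length vs"
  shows "cycle_next vs (vs ! j) = vs ! (Suc j mod length vs)"
proof -
  have "(THE i. i < length vs \<and> vs ! i = vs ! j) = j"
    using assms by (auto simp: nth_eq_iff_index_eq)
  then show ?thesis unfolding cycle_next_def by simp
qed

section \<open>Layers of a purified instance\<close>

definition choice_repair :: "(nat \<Rightarrow> ('a \<times> 'a) set) \<Rightarrow> ('a \<Rightarrow> 'a) \<Rightarrow> nat \<Rightarrow> ('a \<times> 'a) set" where
  "choice_repair I f i = {(a, b) \<in> I i. b = f a}"

lemma Cf_choice_repair: "Cf k (choice_repair I f) = {as \<in> Cf k I. closed_walk f as}"
  unfolding Cf_def choice_repair_def closed_walk_def by auto

lemma closed_walk_simple_cycle:
  "xs \<noteq> [] \<Longrightarrow> distinct xs \<Longrightarrow> closed_walk f xs \<Longrightarrow> \<forall>x\<in>set xs. (x, f x) \<in> E \<Longrightarrow> simple_cycle E xs"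
  unfolding simple_cycle_def closed_walk_def by auto

locale layered_instance =
  fixes k :: nat and I :: "nat \<Rightarrow> ('a \<times> 'a) set"
  assumes k_pos: "0 < k"
    and positions: "distinct_positions k I"
    and purified: "purified k I"
begin

abbreviation "E \<equiv> inst_edges k I"
abbreviation "V \<equiv> inst_vertices k I"

lemma Domain_unique: "i < k \<Longrightarrow> j < k \<Longrightarrow> a \<in> Domain (I i) \<Longrightarrow> a \<in> Domain (I j) \<Longrightarrow> i = j"
  using positions unfolding distinct_positions_def var_consts_def by blast

lemma target_in_next_Domain:
  assumes "i < k" "(a, b) \<in> I i"
  shows "b \<in> Domain (I (Suc i mod k))"
proof -
  obtain as where as: "as \<in> Cf k I" "as ! i = a" "as ! (Suc i mod k) = b"
    using purified assms unfolding purified_def by fastforce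
  have "Suc i mod k < k" using k_pos by simp
  with as show ?thesis unfolding Cf_def by force
qed

definition layer :: "'a \<Rightarrow> nat" where
  "layer v = (THE i. i < k \<and> v \<in> Domain (I i))"

lemma layer_eqI: "i < k \<Longrightarrow> v \<in> Domain (I i) \<Longrightarrow> layer v = i"
  unfolding layer_def by (rule the_equality) (auto dest: Domain_unique)

lemma edge_layer:
  assumes "(a, b) \<in> E"
  shows "(a, b) \<in> I (layer a)" "layer b = Suc (layer a) mod k"
proof -
  obtain i where i: "i < k" "(a, b) \<in> I i" using assms unfolding inst_edges_def by auto
  then have "layer a = i" by (auto intro: layer_eqI)
  moreover have "layer b = Suc i mod k"
    using i k_pos target_in_next_Domain by (auto intro: layer_eqI)
  ultimately show "(a, b) \<in> I (layer a)" "layer b = Suc (layer a) mod k"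
    using i by simp_all
qed

lemma vertex_has_layer:
  assumes "v \<in> V"
  shows "layer v < k" "v \<in> Domain (I (layer v))"
proof -
  obtain i where "i < k" "v \<in> Domain (I i)"
  proof (cases "v \<in> Domain E")
    case True
    then show thesis using that unfolding inst_edges_def by auto
  next
    case False
    then obtain a i where "i < k" "(a, v) \<in> I i"
      using assms unfolding inst_vertices_def inst_edges_def by auto
    then show thesis using that[of "Suc i mod k"] k_pos target_in_next_Domain by auto
  qed
  then show "layer v < k" "v \<in> Domain (I (layer v))" using layer_eqI by simp_all
qed

lemma edge_vertices: "(a, b) \<in> E \<Longrightarrow> a \<in> V \<and> b \<in> V"
  unfolding inst_vertices_def by auto

lemma inst_edgesI: "(a, b) \<in> I i \<Longrightarrow> i < k \<Longrightarrow> (a, b) \<in> E"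
  unfolding inst_edges_def by auto

lemma simple_cycle_vertices: "simple_cycle E vs \<Longrightarrow> set vs \<subseteq> V"
  unfolding simple_cycle_def by (metis edge_vertices in_set_conv_nth subsetI)

lemma Cf_edge: "as \<in> Cf k I \<Longrightarrow> i < k \<Longrightarrow> (as ! i, as ! (Suc i mod k)) \<in> I i"
  unfolding Cf_def by auto

lemma Cf_vertices:
  assumes "as \<in> Cf k I"
  shows "set as \<subseteq> V"
proof
  fix v assume "v \<in> set as"
  then obtain i where "i < k" "v = as ! i" using assms unfolding Cf_def by (auto simp: in_set_conv_nth)
  then show "v \<in> V" using Cf_edge[OF assms] inst_edgesI edge_vertices by blast
qed

lemma Cf_layer: "as \<in> Cf k I \<Longrightarrow> i < k \<Longrightarrow> layer (as ! i) = i"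
  using Cf_edge by (blast intro: layer_eqI)

lemma Cf_simple_cycle:
  assumes "t \<in> Cf k I"
  shows "simple_cycle E t"
proof -
  have len: "length t = k" using assms unfolding Cf_def by simp
  have "distinct t"
    unfolding distinct_conv_nth using Cf_layer[OF assms] len by metis
  then show ?thesis
    unfolding simple_cycle_def inst_edges_def using len k_pos Cf_edge[OF assms] by auto
qed

lemma simple_cycle_layer:
  assumes vs: "simple_cycle E vs" and "j < length vs"
  shows "layer (vs ! j) = (layer (vs ! 0) + j) mod k"
  using \<open>j < length vs\<close>
proof (induction j)
  case 0
  then have "vs ! 0 \<in> V" using simple_cycle_vertices[OF vs] by auto
  then show ?case using vertex_has_layer(1) by simp
next
  case (Suc j)
  then have "(vs ! j, vs ! Suc j) \<in> E" using vs unfolding simple_cycle_def by (metis Suc_lessD mod_less Suc_eq_plus1)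
  then show ?case using Suc edge_layer(2) by (simp add: mod_Suc_eq)
qed

lemma simple_cycle_length_dvd:
  assumes vs: "simple_cycle E vs"
  shows "k dvd length vs"
proof -
  let ?n = "length vs" and ?L = "layer (vs ! 0)"
  have "0 < ?n" using vs unfolding simple_cycle_def by simp
  then have "(vs ! (?n - 1), vs ! 0) \<in> E"
    using vs unfolding simple_cycle_def by (metis Suc_diff_1 diff_less mod_self zero_less_one Suc_eq_plus1)
  then have "?L = Suc (layer (vs ! (?n - 1))) mod k" by (rule edge_layer(2))
  also have "\<dots> = Suc ((?L + ?n - 1) mod k) mod k"
    using simple_cycle_layer[OF vs, of "?n - 1"] \<open>0 < ?n\<close> by simp
  also have "\<dots> = (?L + ?n) mod k"
    using \<open>0 < ?n\<close> by (simp add: mod_Suc_eq)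
  finally have "?L mod k = (?L + ?n) mod k"
    using simple_cycle_layer[OF vs, of 0] \<open>0 < ?n\<close> by simp
  then show ?thesis using mod_eq_dvd_iff_nat[of ?L "?L + ?n" k] by simp
qed

lemma simple_cycle_in_Cf:
  assumes vs: "simple_cycle E vs" and "length vs = k" "layer (vs ! 0) = 0"
  shows "vs \<in> Cf k I"
  unfolding Cf_def
proof (intro CollectI conjI allI impI)
  fix i assume "i < k"
  then have "(vs ! i, vs ! ((i + 1) mod k)) \<in> E" using vs assms(2) unfolding simple_cycle_def by simp
  moreover have "layer (vs ! i) = i" using simple_cycle_layer[OF vs, of i] assms(2,3) \<open>i < k\<close> by simp
  ultimately show "(vs ! i, vs ! ((i + 1) mod k)) \<in> I i" using edge_layer(1) by fastforce
qed (fact assms(2))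

lemma choice_repair_is_repair:
  assumes f: "\<forall>v\<in>V. (v, f v) \<in> E"
  shows "repair k I (choice_repair I f)"
  unfolding repair_def
proof (intro conjI allI impI)
  fix i assume "i < k"
  show "choice_repair I f i \<subseteq> I i" "key_cons (choice_repair I f i)"
    unfolding choice_repair_def key_cons_def by auto
next
  fix r' i
  assume r': "\<forall>i<k. choice_repair I f i \<subseteq> r' i \<and> r' i \<subseteq> I i \<and> key_cons (r' i)" and i: "i < k"
  then have sub: "choice_repair I f i \<subseteq> r' i" "r' i \<subseteq> I i" and kc: "key_cons (r' i)" by simp_all
  show "r' i = choice_repair I f i"
  proof (intro equalityI subsetI)
    fix x assume x: "x \<in> r' i"
    obtain a b where ab: "x = (a, b)" by (cases x)
    with x sub have "(a, b) \<in> I i" by blast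
    then have "a \<in> V" "layer a = i" using inst_edgesI[OF _ i] edge_vertices i by (auto intro: layer_eqI)
    then have "(a, f a) \<in> I i" using f edge_layer(1) by fastforce
    then have "(a, f a) \<in> r' i" using sub unfolding choice_repair_def by blast
    with x ab kc have "b = f a" unfolding key_cons_def by blast
    then show "x \<in> choice_repair I f i" using ab \<open>(a, b) \<in> I i\<close> unfolding choice_repair_def by simp
  qed (use sub in blast)
qed

lemma repair_is_choice_repair:
  assumes r: "repair k I r"
  obtains f where "\<forall>v\<in>V. (v, f v) \<in> E" "Cf k r = Cf k (choice_repair I f)"
proof
  define f where "f v = (SOME b. (v, b) \<in> r (layer v))" for v
  have f_r: "(v, f v) \<in> r (layer v)" if "v \<in> V" for v
    using repair_total[OF r vertex_has_layer[OF that]] unfolding f_def by (auto intro: someI)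
  have r_sub: "r i \<subseteq> I i" and kc: "key_cons (r i)" if "i < k" for i
    using r that unfolding repair_def by simp_all
  show "\<forall>v\<in>V. (v, f v) \<in> E"
    using f_r r_sub vertex_has_layer(1) inst_edgesI by blast
  have "r i = choice_repair I f i" if i: "i < k" for i
  proof (intro equalityI subsetI)
    fix x assume x: "x \<in> r i"
    obtain a b where ab: "x = (a, b)" by (cases x)
    with x r_sub[OF i] have "(a, b) \<in> I i" by blast
    then have "a \<in> V" "layer a = i" using inst_edgesI[OF _ i] edge_vertices i by (auto intro: layer_eqI)
    then have "(a, f a) \<in> r i" using f_r by blast
    with x ab kc[OF i] have "b = f a" unfolding key_cons_def by blast
    then show "x \<in> choice_repair I f i"
      using ab \<open>(a, b) \<in> I i\<close> unfolding choice_repair_def by simp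
  next
    fix x assume "x \<in> choice_repair I f i"
    then obtain a where a: "x = (a, f a)" "(a, f a) \<in> I i" unfolding choice_repair_def by auto
    then have "a \<in> V" "layer a = i" using inst_edgesI[OF _ i] edge_vertices i by (auto intro: layer_eqI)
    then show "x \<in> r i" using a f_r by blast
  qed
  then show "Cf k r = Cf k (choice_repair I f)" by (rule Cf_cong)
qed

lemma choice_repair_has_answer:
  assumes "finite V" "V \<noteq> {}" and f: "\<forall>v\<in>V. (v, f v) \<in> E"
    and no_long_cycle: "\<not> (\<exists>vs. simple_cycle E vs \<and> length vs > k)"
  shows "Cf k (choice_repair I f) \<noteq> {}"
proof -
  have "f ` V \<subseteq> V" using f edge_vertices by blast
  moreover obtain x where "x \<in> V" using assms(2) by blast
  ultimately obtain vs where vs: "vs \<noteq> []" "distinct vs" "set vs \<subseteq> V" "closed_walk f vs"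
    using finite_self_map_cycle[OF assms(1)] by blast
  have f_vs: "\<forall>x\<in>set vs. (x, f x) \<in> E" using f vs(3) by blast
  then have "simple_cycle E vs" by (rule closed_walk_simple_cycle[OF vs(1,2,4)])
  then have "k dvd length vs" "length vs \<le> k"
    using no_long_cycle simple_cycle_length_dvd by auto
  then have "length vs = k" using vs(1) by (simp add: dvd_imp_le le_antisym)
  define L where "L = layer (vs ! 0)"
  define ws where "ws = rotate (k - L) vs"
  have ws: "ws \<noteq> []" "distinct ws" "closed_walk f ws" "length ws = k" "set ws = set vs"
    using vs \<open>length vs = k\<close> closed_walk_rotate unfolding ws_def by simp_all
  have "simple_cycle E ws" using closed_walk_simple_cycle[OF ws(1-3)] f_vs ws(5) by simp
  have "vs ! 0 \<in> V" using vs(1,3) by auto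
  then have "L < k" unfolding L_def by (rule vertex_has_layer(1))
  have "ws ! 0 = vs ! ((k - L) mod k)"
    using nth_rotate[of 0 vs "k - L"] k_pos \<open>length vs = k\<close> unfolding ws_def by simp
  then have "layer (ws ! 0) = (L + (k - L) mod k) mod k"
    using simple_cycle_layer[OF \<open>simple_cycle E vs\<close>, of "(k - L) mod k"] \<open>length vs = k\<close> k_pos
    unfolding L_def by simp
  also have "\<dots> = 0" using \<open>L < k\<close> by (simp add: mod_add_right_eq)
  finally have "ws \<in> Cf k I" using simple_cycle_in_Cf \<open>simple_cycle E ws\<close> ws(4) by blast
  then show ?thesis using ws(3) Cf_choice_repair by blast
qed

end

section \<open>Retraction onto a simple cycle\<close>

locale connected_instance = layered_instance +
  assumes strongly_connected: "strongly_connected (inst_vertices k I) (inst_edges k I)"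
begin

definition hops :: "'a set \<Rightarrow> 'a \<Rightarrow> nat" where
  "hops C v = (LEAST m. \<exists>c\<in>C. (v, c) \<in> E ^^ m)"

lemma hops_descent:
  assumes "C \<subseteq> V" "C \<noteq> {}" "v \<in> V" "v \<notin> C"
  shows "\<exists>u. (v, u) \<in> E \<and> hops C u < hops C v"
proof -
  obtain c where "c \<in> C" using assms(2) by blast
  then have "(v, c) \<in> E\<^sup>*"
    using strongly_connected assms(1,3) unfolding strongly_connected_def by blast
  then have reachable: "\<exists>m. \<exists>c\<in>C. (v, c) \<in> E ^^ m"
    using \<open>c \<in> C\<close> rtrancl_imp_relpow by blast
  obtain c' where c': "c' \<in> C" "(v, c') \<in> E ^^ hops C v"
    using LeastI_ex[OF reachable] unfolding hops_def by blast
  with assms(4) obtain d where d: "hops C v = Suc d" by (cases "hops C v") auto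
  with c' obtain u where u: "(v, u) \<in> E" "(u, c') \<in> E ^^ d" by (metis relpow_Suc_D2)
  then have "\<exists>c\<in>C. (u, c) \<in> E ^^ d" using c'(1) by blast
  then have "hops C u \<le> d" unfolding hops_def by (rule Least_le)
  with u d show ?thesis by auto
qed

definition retraction :: "'a list \<Rightarrow> 'a \<Rightarrow> 'a" where
  "retraction vs v = (if v \<in> set vs then cycle_next vs v
     else SOME u. (v, u) \<in> E \<and> hops (set vs) u < hops (set vs) v)"

lemma closed_walk_retraction:
  assumes "simple_cycle E vs"
  shows "closed_walk (retraction vs) vs"
  unfolding closed_walk_def
proof (intro allI impI)
  fix j assume "j < length vs"
  moreover have "distinct vs" using assms unfolding simple_cycle_def by simp
  ultimately show "vs ! (Suc j mod length vs) = retraction vs (vs ! j)"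
    unfolding retraction_def by (simp add: cycle_next_nth)
qed

lemma retraction_edge:
  assumes "simple_cycle E vs" "v \<in> V"
  shows "(v, retraction vs v) \<in> E"
    and "v \<notin> set vs \<Longrightarrow> hops (set vs) (retraction vs v) < hops (set vs) v"
proof -
  have descent: "(v, retraction vs v) \<in> E \<and> hops (set vs) (retraction vs v) < hops (set vs) v"
    if "v \<notin> set vs"
  proof -
    have "set vs \<noteq> {}" using assms(1) unfolding simple_cycle_def by simp
    then have "\<exists>u. (v, u) \<in> E \<and> hops (set vs) u < hops (set vs) v"
      using hops_descent simple_cycle_vertices assms that by blast
    then have "(v, SOME u. (v, u) \<in> E \<and> hops (set vs) u < hops (set vs) v) \<in> E \<and>
        hops (set vs) (SOME u. (v, u) \<in> E \<and> hops (set vs) u < hops (set vs) v) < hops (set vs) v"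
      by (rule someI_ex)
    then show ?thesis unfolding retraction_def using that by simp
  qed
  show "(v, retraction vs v) \<in> E"
  proof (cases "v \<in> set vs")
    case True
    then obtain j where "j < length vs" "v = vs ! j" by (auto simp: in_set_conv_nth)
    moreover have "vs ! (Suc j mod length vs) = retraction vs (vs ! j)"
      using closed_walk_retraction[OF assms(1)] \<open>j < length vs\<close> unfolding closed_walk_def by blast
    ultimately show ?thesis using assms(1) unfolding simple_cycle_def by auto
  qed (use descent in blast)
  show "v \<notin> set vs \<Longrightarrow> hops (set vs) (retraction vs v) < hops (set vs) v"
    using descent by blast
qed

lemma retraction_answer_on_cycle:
  assumes vs: "simple_cycle E vs" and as: "as \<in> Cf k (choice_repair I (retraction vs))"
  shows "set as \<subseteq> set vs"
proof (rule closed_walk_in_invariant_set)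
  show "\<forall>x\<in>set vs. retraction vs x \<in> set vs"
  proof
    fix x assume "x \<in> set vs"
    then obtain j where j: "j < length vs" "x = vs ! j" by (auto simp: in_set_conv_nth)
    then have "retraction vs x = vs ! (Suc j mod length vs)"
      using closed_walk_retraction[OF vs] unfolding closed_walk_def by simp
    moreover have "Suc j mod length vs < length vs" using j(1) by (cases vs) simp_all
    ultimately show "retraction vs x \<in> set vs" by simp
  qed
  show "\<forall>x\<in>V - set vs. hops (set vs) (retraction vs x) < hops (set vs) x"
    using retraction_edge(2)[OF vs] by blast
  show "closed_walk (retraction vs) as" "set as \<subseteq> V"
    using as Cf_vertices unfolding Cf_choice_repair by auto
qed

lemma long_cycle_retraction_no_answer:
  assumes vs: "simple_cycle E vs" and long: "k < length vs"
  shows "Cf k (choice_repair I (retraction vs)) = {}"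
proof (rule ccontr)
  assume "Cf k (choice_repair I (retraction vs)) \<noteq> {}"
  then obtain as where as: "as \<in> Cf k (choice_repair I (retraction vs))" by blast
  then have "as \<in> Cf k I" "closed_walk (retraction vs) as" unfolding Cf_choice_repair by simp_all
  then have "length as = k" "closed_walk (retraction vs) as" unfolding Cf_def by simp_all
  moreover have "as ! 0 \<in> set vs" using retraction_answer_on_cycle[OF vs as] k_pos \<open>length as = k\<close> by auto
  moreover have "distinct vs" using vs unfolding simple_cycle_def by simp
  moreover have "as \<noteq> []" using \<open>length as = k\<close> k_pos by auto
  ultimately have "length vs dvd k"
    using closed_walk_length_dvd[OF closed_walk_retraction[OF vs]] by metis
  with long k_pos show False by (simp add: dvd_imp_le leD)
qed

lemma answer_retraction_singleton:
  assumes t: "t \<in> Cf k I"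
  shows "Cf k (choice_repair I (retraction t)) = {t}"
proof (intro equalityI subsetI)
  have t_cycle: "simple_cycle E t" using Cf_simple_cycle[OF t] .
  fix as assume as: "as \<in> Cf k (choice_repair I (retraction t))"
  have len: "length as = k" "length t = k" using as t unfolding Cf_choice_repair Cf_def by auto
  then have "as ! 0 \<in> set t" using retraction_answer_on_cycle[OF t_cycle as] k_pos by auto
  then obtain j where j: "j < k" "as ! 0 = t ! j" using len by (auto simp: in_set_conv_nth)
  have "j = 0" using Cf_layer[OF t j(1)] Cf_layer[of as 0] as j(2) k_pos
    unfolding Cf_choice_repair by auto
  then have "as = t"
    using closed_walk_eqI[OF _ closed_walk_retraction[OF t_cycle]] as j len
    unfolding Cf_choice_repair by simp
  then show "as \<in> {t}" by simp
next
  fix as assume "as \<in> {t}"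
  then show "as \<in> Cf k (choice_repair I (retraction t))"
    using t closed_walk_retraction[OF Cf_simple_cycle[OF t]] unfolding Cf_choice_repair by auto
qed

lemma retraction_is_repair: "simple_cycle E vs \<Longrightarrow> repair k I (choice_repair I (retraction vs))"
  using choice_repair_is_repair retraction_edge(1) by blast

end

theorem lemma4p3:
  fixes k :: nat and I :: "nat \<Rightarrow> ('a \<times> 'a) set" and CT :: "nat set"
  assumes "k \<ge> 2"
    and "\<forall>i<k. finite (I i)"
    and "\<forall>i\<in>CT. i < k \<longrightarrow> key_cons (I i)"
    and "distinct_positions k I"
    and "purified k I"
    and "strongly_connected (inst_vertices k I) (inst_edges k I)"
  shows "((\<exists>vs. simple_cycle (inst_edges k I) vs \<and> length vs > k) \<longrightarrow>
            MC k I = {{}} \<and> \<not> entails k I)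
       \<and> ((\<not> (\<exists>vs. simple_cycle (inst_edges k I) vs \<and> length vs > k)) \<longrightarrow>
            MC k I = {{t} | t. t \<in> Cf k I})"
proof -
  interpret connected_instance k I
    using assms(1,4-6) by unfold_locales auto
  have "finite V"
    using assms(2) unfolding inst_vertices_def inst_edges_def by (auto intro!: finite_Domain finite_Range)
  have "V \<noteq> {}" using assms(6) unfolding strongly_connected_def by simp
  show ?thesis
  proof (rule conjI; rule impI)
    assume "\<exists>vs. simple_cycle E vs \<and> length vs > k"
    then obtain vs where "simple_cycle E vs" "k < length vs" by blast
    then have "repair k I (choice_repair I (retraction vs))"
      and "Cf k (choice_repair I (retraction vs)) = {}"
      by (simp_all add: retraction_is_repair long_cycle_retraction_no_answer)
    then show "MC k I = {{}} \<and> \<not> entails k I"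
      using MC_eq_empty_if_answerless_repair unfolding entails_def by blast
  next
    assume no_long_cycle: "\<not> (\<exists>vs. simple_cycle E vs \<and> length vs > k)"
    show "MC k I = {{t} | t. t \<in> Cf k I}"
    proof (rule MC_eq_singletons)
      fix r assume "repair k I r"
      then obtain f where "\<forall>v\<in>V. (v, f v) \<in> E" "Cf k r = Cf k (choice_repair I f)"
        by (rule repair_is_choice_repair)
      then show "Cf k r \<noteq> {}"
        using choice_repair_has_answer[OF \<open>finite V\<close> \<open>V \<noteq> {}\<close> _ no_long_cycle] by simp
    next
      fix t assume "t \<in> Cf k I"
      then show "\<exists>r. repair k I r \<and> Cf k r = {t}"
        using retraction_is_repair[OF Cf_simple_cycle] answer_retraction_singleton by blast
    qed
  qed
qed

end
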